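(* Let $L=10^6$, $\rho<L^{-16}$, and let $\xi=(\xi_i)_{i\in\mathbb{Z}}$ be i.i.d. with $\mathbb{P}(\xi_i\ge n)=\rho^n$ for $n\in\{0,1,2,\dots\}$. With $H_m,B_m$ defined below from $\xi$, let $p_{k,h,b}=\mathbb{P}[H_{(k,0)}=h,\,B_{(k,0)}=b]$. Then for every $k,b\ge0$ and $h\ge1$, $$p_{k,h,b}\le L^{-\left(k+\frac{h}{b+1}\right)-2h-13}.$$
   Context: Let $L_k=L^k$. For $k\ge0$ and $i\in\mathbb{Z}$ let $I_{(k,i)}=[iL_k,(i+1)L_k)\cap\mathbb{Z}$ and $M_k=\{k\}\times\mathbb{Z}$. For $m=(k+1,i)\in M_{k+1}$ let $\mathcal{Q}_m=\{(k,iL+j):0\le j\le L-1\}$. Define $H_m$ recursively: $H_{(0,i)}=\xi_i$; for $m\in M_{k+1}$, $H_m=0$ if every $m'\in\mathcal{Q}_m$ is good; $H_m=H_{m_1}-1$ if $m_1$ is the only bad element of $\mathcal{Q}_m$; $H_m=1+\sum_{i=1}^r H_{m_i}$ if $m_1,\dots,m_r$ with $r\ge2$ are the bad elements of $\mathcal{Q}_m$. Here $m$ is good if $H_m=0$ and bad otherwise. Define $B_m$ recursively: $B_{(0,i)}=0$; for $m\in M_{k+1}$, $B_m=0$ if $m$ is good; $B_m=B_{m'}$ if $m$ is bad and $m'$ is the only bad element of $\mathcal{Q}_m$; $B_m=k+1$ if $\mathcal{Q}_m$ contains more than one bad element. *)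

theory Defs
  imports "HOL-Probability.Probability"
begin

text \<open>Block (k,i) with parameter L (L_k = L^k). The children of (k+1,i) are
  (k, i*L + j), 0 <= j <= L-1.  The field x :: int => nat is the configuration xi.\<close>

fun Hf :: "nat \<Rightarrow> (int \<Rightarrow> nat) \<Rightarrow> nat \<Rightarrow> int \<Rightarrow> int" where
  "Hf L x 0 i = int (x i)"
| "Hf L x (Suc k) i =
     (let bad = filter (\<lambda>j. Hf L x k (i * int L + int j) \<noteq> 0) [0..<L] in
      if bad = [] then 0
      else if length bad = 1 then Hf L x k (i * int L + int (hd bad)) - 1
      else 1 + sum_list (map (\<lambda>j. Hf L x k (i * int L + int j)) bad))"

fun Bf :: "nat \<Rightarrow> (int \<Rightarrow> nat) \<Rightarrow> nat \<Rightarrow> int \<Rightarrow> nat" where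
  "Bf L x 0 i = 0"
| "Bf L x (Suc k) i =
     (let bad = filter (\<lambda>j. Hf L x k (i * int L + int j) \<noteq> 0) [0..<L] in
      if Hf L x (Suc k) i = 0 then 0
      else if length bad = 1 then Bf L x k (i * int L + int (hd bad))
      else Suc k)"

end

theory Submission
  imports Defs
begin

text \<open>Since h/(b+1) \<le> h, the event {H = h, B = b} may be enlarged to {H = h}, and it suffices
  to show P[H_(k,i) = h] \<le> c_k x_k^h with c_k = L^-(11+3k) and x_k = (2 - 2^-k) L^-5, by
  induction on k; this works for every L \<ge> 50. A block of level k+1 has height h \<ge> 1 either
  because exactly one child is bad and has height h+1, which costs at most L c_k x_k^(h+1), or
  because at least two children are bad with heights summing to h-1. In the second case the
  heights of the children are independent, as they depend on disjoint blocks of \<xi>; writing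
  x_k^g = x_(k+1)^g (x_k/x_(k+1))^g, the sum over all such height profiles is at most
  x_(k+1)^(h-1) (L S)^2 (1+S)^L with S = \<Sum>_a c_k (x_k/x_(k+1))^a \<le> 4 2^k c_k. The slow growth of
  x_k is what keeps this geometric series bounded uniformly in h, and both contributions then
  fit below c_(k+1) x_(k+1)^h = L^-3 c_k x_(k+1)^h.\<close>

section \<open>Heights of blocks\<close>

definition nonzero_count :: "('b::zero) list \<Rightarrow> nat" where
  "nonzero_count xs = length (filter (\<lambda>v. v \<noteq> 0) xs)"

definition parent_H :: "int list \<Rightarrow> int" where
  "parent_H hs = (let bad = filter (\<lambda>v. v \<noteq> 0) hs in
      if bad = [] then 0
      else if length bad = 1 then hd bad - 1
      else 1 + sum_list bad)"

lemma Hf_Suc_eq_parent_H: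
  "Hf L x (Suc k) i = parent_H (map (\<lambda>j. Hf L x k (i * int L + int j)) [0..<L])"
  by (simp add: parent_H_def filter_map hd_map o_def Let_def)

lemma parent_H_nonneg:
  assumes "\<And>v. v \<in> set hs \<Longrightarrow> 0 \<le> v"
  shows "0 \<le> parent_H hs"
proof -
  have "0 \<le> sum_list (filter (\<lambda>v. v \<noteq> 0) hs)"
    using assms by (intro sum_list_nonneg) auto
  moreover have "filter (\<lambda>v. v \<noteq> 0) hs \<noteq> [] \<Longrightarrow> 1 \<le> hd (filter (\<lambda>v. v \<noteq> 0) hs)"
    using assms hd_in_set[of "filter (\<lambda>v. v \<noteq> 0) hs"] by fastforce
  ultimately show ?thesis unfolding parent_H_def Let_def by auto
qed

lemma Hf_nonneg: "0 \<le> Hf L x k i"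
proof (induction k arbitrary: i)
  case (Suc k)
  show ?case unfolding Hf_Suc_eq_parent_H by (rule parent_H_nonneg) (use Suc.IH in auto)
qed simp

lemma parent_H_eq_cases:
  assumes nonneg: "\<And>v. v \<in> set hs \<Longrightarrow> 0 \<le> v" and h: "parent_H hs = int h" "1 \<le> h"
  obtains "int h + 1 \<in> set hs"
    | "2 \<le> nonzero_count hs" "sum_list hs = int h - 1"
proof -
  define bad where "bad = filter (\<lambda>v. v \<noteq> 0) hs"
  have "bad \<noteq> []" using h by (auto simp: parent_H_def bad_def)
  show thesis
  proof (cases "length bad = 1")
    case True
    then have "hd bad = int h + 1" using h \<open>bad \<noteq> []\<close> by (simp add: parent_H_def bad_def[symmetric])
    then have "int h + 1 \<in> set hs" using \<open>bad \<noteq> []\<close> hd_in_set by (fastforce simp: bad_def)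
    then show thesis by (rule that(1))
  next
    case False
    have "sum_list bad = sum_list hs" unfolding bad_def by (rule sum_list_filter_nonzero)
    then have "sum_list hs = int h - 1"
      using h False \<open>bad \<noteq> []\<close> by (simp add: parent_H_def bad_def[symmetric])
    moreover have "2 \<le> nonzero_count hs"
      using False \<open>bad \<noteq> []\<close> by (cases bad) (auto simp: nonzero_count_def bad_def[symmetric] Suc_le_eq)
    ultimately show thesis using that(2) by blast
  qed
qed

definition block :: "nat \<Rightarrow> nat \<Rightarrow> int \<Rightarrow> int set" where
  "block L k i = {i * int L ^ k ..< (i + 1) * int L ^ k}"

lemma block_child_subset:
  assumes "j < L"
  shows "block L k (i * int L + int j) \<subseteq> block L (Suc k) i"
proof -
  have "(int j + 1) * int L ^ k \<le> int L * int L ^ k"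
    using assms by (intro mult_right_mono) auto
  then have "(i * int L + int j + 1) * int L ^ k \<le> (i + 1) * int L ^ Suc k"
    by (simp add: algebra_simps)
  moreover have "i * int L ^ Suc k \<le> (i * int L + int j) * int L ^ k"
    by (simp add: algebra_simps)
  ultimately show ?thesis by (auto simp: block_def)
qed

lemma disjoint_blocks:
  assumes "0 < L" "a \<noteq> b"
  shows "block L k a \<inter> block L k b = {}"
proof -
  have "(a + 1) * int L ^ k \<le> b * int L ^ k" if "a < b" for a b
    using that by (intro mult_right_mono) auto
  then show ?thesis using assms by (cases "a < b") (auto simp: block_def neq_iff)
qed

lemma Hf_cong_block:
  assumes "\<And>t. t \<in> block L k i \<Longrightarrow> x t = y t"
  shows "Hf L x k i = Hf L y k i"
  using assms
proof (induction k arbitrary: i)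
  case (Suc k)
  have "Hf L x k (i * int L + int j) = Hf L y k (i * int L + int j)" if "j < L" for j
    using Suc block_child_subset[OF that] by blast
  then show ?case unfolding Hf_Suc_eq_parent_H by (intro arg_cong[where f = parent_H] map_cong) auto
qed (simp add: block_def)

section \<open>Height profiles with several bad children\<close>

definition bounded_lists :: "nat \<Rightarrow> nat \<Rightarrow> nat list set" where
  "bounded_lists h n = {gs. set gs \<subseteq> {0..h} \<and> length gs = n}"

definition many_nonzero_weight :: "(nat \<Rightarrow> real) \<Rightarrow> nat \<Rightarrow> nat \<Rightarrow> nat \<Rightarrow> real" where
  "many_nonzero_weight w h n d =
     (\<Sum>gs\<in>bounded_lists h n. if d \<le> nonzero_count gs then prod_list (map w gs) else 0)"

lemma finite_bounded_lists: "finite (bounded_lists h n)"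
  unfolding bounded_lists_def by (rule finite_lists_length_eq) auto

lemma sum_bounded_lists_Suc:
  "(\<Sum>gs\<in>bounded_lists h (Suc n). F gs) = (\<Sum>a\<in>{0..h}. \<Sum>gs\<in>bounded_lists h n. F (a # gs))"
proof -
  have image: "bounded_lists h (Suc n) = (\<lambda>(gs, a). a # gs) ` (bounded_lists h n \<times> {0..h})"
    unfolding bounded_lists_def lists_length_Suc_eq by auto
  have "inj_on (\<lambda>(gs, a). a # gs) (bounded_lists h n \<times> {0..h})"
    by (auto simp: inj_on_def)
  then have "(\<Sum>gs\<in>bounded_lists h (Suc n). F gs) = (\<Sum>(gs, a)\<in>bounded_lists h n \<times> {0..h}. F (a # gs))"
    unfolding image by (subst sum.reindex) (auto simp: case_prod_beta)
  also have "\<dots> = (\<Sum>gs\<in>bounded_lists h n. \<Sum>a\<in>{0..h}. F (a # gs))"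
    by (rule sum.cartesian_product[symmetric])
  finally show ?thesis by (simp add: sum.swap[of _ "{0..h}"])
qed

lemma many_nonzero_weight_Suc:
  assumes "w 0 = 1"
  shows "many_nonzero_weight w h (Suc n) d
           = many_nonzero_weight w h n d + (\<Sum>a\<in>{1..h}. w a) * many_nonzero_weight w h n (d - 1)"
proof -
  let ?F = "\<lambda>d gs. if d \<le> nonzero_count gs then prod_list (map w gs) else 0"
  have "many_nonzero_weight w h (Suc n) d = (\<Sum>a\<in>insert 0 {1..h}. \<Sum>gs\<in>bounded_lists h n. ?F d (a # gs))"
    unfolding many_nonzero_weight_def sum_bounded_lists_Suc by (intro sum.cong) auto
  also have "\<dots> = (\<Sum>gs\<in>bounded_lists h n. ?F d (0 # gs))
                   + (\<Sum>a\<in>{1..h}. \<Sum>gs\<in>bounded_lists h n. ?F d (a # gs))"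
    by (simp add: sum.insert)
  also have "(\<Sum>gs\<in>bounded_lists h n. ?F d (0 # gs)) = many_nonzero_weight w h n d"
    unfolding many_nonzero_weight_def using assms by (intro sum.cong) (auto simp: nonzero_count_def)
  also have "(\<Sum>a\<in>{1..h}. \<Sum>gs\<in>bounded_lists h n. ?F d (a # gs))
      = (\<Sum>a\<in>{1..h}. w a * many_nonzero_weight w h n (d - 1))"
    unfolding many_nonzero_weight_def sum_distrib_left
    by (intro sum.cong refl) (auto simp: nonzero_count_def)
  finally show ?thesis by (simp add: sum_distrib_right)
qed

lemma many_nonzero_weight_le:
  fixes w :: "nat \<Rightarrow> real" and h n d :: nat
  assumes w0: "w 0 = 1" and w_nonneg: "\<And>a. 0 \<le> w a"
  defines "S \<equiv> \<Sum>a\<in>{1..h}. w a"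
  shows "many_nonzero_weight w h n d \<le> (real n * S) ^ d * (1 + S) ^ n"
proof (induction n arbitrary: d)
  case 0
  have "bounded_lists h 0 = {[]}" by (auto simp: bounded_lists_def)
  then show ?case by (cases d) (auto simp: many_nonzero_weight_def nonzero_count_def)
next
  case (Suc n)
  have S: "0 \<le> S" unfolding S_def by (intro sum_nonneg w_nonneg)
  show ?case
  proof (cases d)
    case 0
    have "many_nonzero_weight w h (Suc n) d = (1 + S) * many_nonzero_weight w h n 0"
      using 0 by (simp add: many_nonzero_weight_Suc[of w, OF w0] S_def algebra_simps)
    also have "\<dots> \<le> (1 + S) * (1 + S) ^ n"
      using Suc.IH[of 0] S by (intro mult_left_mono) auto
    finally show ?thesis using 0 by simp
  next
    case (Suc e)
    have "many_nonzero_weight w h (Suc n) d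
        \<le> (real n * S) ^ Suc e * (1 + S) ^ n + S * ((real n * S) ^ e * (1 + S) ^ n)"
      unfolding many_nonzero_weight_Suc[of w, OF w0] S_def[symmetric] Suc
      using Suc.IH[of "Suc e"] Suc.IH[of e] S by (intro add_mono mult_left_mono) auto
    also have "\<dots> = real n ^ e * (real n + 1) * S ^ Suc e * (1 + S) ^ n"
      by (simp add: algebra_simps power_mult_distrib)
    also have "\<dots> \<le> real (Suc n) ^ e * real (Suc n) * S ^ Suc e * (1 + S) ^ Suc n"
      using S by (intro mult_mono power_mono) auto
    finally show ?thesis by (simp add: Suc power_mult_distrib mult_ac)
  qed
qed

definition nonzero_positions :: "nat list \<Rightarrow> nat set" where
  "nonzero_positions gs = {j. j < length gs \<and> gs ! j \<noteq> 0}"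

lemma nonzero_positions_nonempty:
  assumes "1 \<le> nonzero_count gs"
  shows "nonzero_positions gs \<noteq> {}"
proof -
  obtain a where "a \<in> set gs" "a \<noteq> 0"
    using assms by (auto simp: nonzero_count_def filter_empty_conv Suc_le_eq length_greater_0_conv)
  then show ?thesis by (auto simp: nonzero_positions_def in_set_conv_nth)
qed

lemma prod_nonzero_positions_eq:
  fixes c x y :: real
  assumes "y \<noteq> 0"
  shows "(\<Prod>j\<in>nonzero_positions gs. c * x ^ (gs ! j))
           = y ^ sum_list gs * prod_list (map (\<lambda>a. if a = 0 then 1 else c * (x / y) ^ a) gs)"
proof -
  have "(\<Prod>j\<in>nonzero_positions gs. c * x ^ (gs ! j))
      = (\<Prod>j<length gs. if gs ! j \<noteq> 0 then c * x ^ (gs ! j) else 1)"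
    unfolding nonzero_positions_def by (simp add: prod.inter_filter[symmetric] lessThan_def)
  also have "\<dots> = (\<Prod>j<length gs. y ^ (gs ! j) * (if gs ! j = 0 then 1 else c * (x / y) ^ (gs ! j)))"
    using assms by (intro prod.cong refl) (simp add: power_divide)
  also have "\<dots> = y ^ sum_list gs * prod_list (map (\<lambda>a. if a = 0 then 1 else c * (x / y) ^ a) gs)"
    by (simp add: prod.distrib power_sum sum.list_conv_set_nth prod.list_conv_set_nth atLeast0LessThan)
  finally show ?thesis .
qed

definition several_bad_profiles :: "nat \<Rightarrow> nat \<Rightarrow> nat list set" where
  "several_bad_profiles L h = {gs \<in> bounded_lists h L. 2 \<le> nonzero_count gs \<and> sum_list gs = h - 1}"

lemma finite_several_bad_profiles: "finite (several_bad_profiles L h)"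
  using finite_bounded_lists by (simp add: several_bad_profiles_def)

lemma map_nat_in_several_bad_profiles:
  assumes nonneg: "\<And>v. v \<in> set hs \<Longrightarrow> 0 \<le> v" and "length hs = L"
    and "2 \<le> nonzero_count hs" "sum_list hs = int h - 1" "1 \<le> h"
  shows "map nat hs \<in> several_bad_profiles L h"
proof -
  have sum: "sum_list (map nat hs) = h - 1"
  proof -
    have "int (sum_list (map nat hs)) = sum_list hs"
      using nonneg by (induction hs) auto
    then show ?thesis using assms by linarith
  qed
  moreover have "set (map nat hs) \<subseteq> {0..h}"
    using member_le_sum_list[of _ "map nat hs"] sum by fastforce
  moreover have "nonzero_count (map nat hs) = nonzero_count hs"
  proof -
    have "filter (\<lambda>v. nat v \<noteq> 0) hs = filter (\<lambda>v. v \<noteq> 0) hs"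
      by (intro filter_cong refl) (force dest: nonneg)
    then show ?thesis unfolding nonzero_count_def filter_map o_def by (simp only: length_map)
  qed
  ultimately show ?thesis using assms by (simp add: several_bad_profiles_def bounded_lists_def)
qed

lemma several_bad_profiles_weight_le:
  fixes c x y :: real and L h :: nat
  assumes "0 \<le> c" "0 \<le> x" "0 < y"
  defines "S \<equiv> \<Sum>a\<in>{1..h}. c * (x / y) ^ a"
  shows "(\<Sum>gs\<in>several_bad_profiles L h. \<Prod>j\<in>nonzero_positions gs. c * x ^ (gs ! j))
           \<le> y ^ (h - 1) * (real L * S) ^ 2 * (1 + S) ^ L"
proof -
  define w where "w a = (if a = 0 then 1 else c * (x / y) ^ a)" for a
  have w_nonneg: "0 \<le> w a" for a using assms by (simp add: w_def)
  have S_w: "S = (\<Sum>a\<in>{1..h}. w a)" unfolding S_def w_def by (intro sum.cong) auto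
  \<comment> \<open>Each profile sums to h - 1, so changing the base from x to y pulls out y ^ (h - 1).\<close>
  have "(\<Sum>gs\<in>several_bad_profiles L h. \<Prod>j\<in>nonzero_positions gs. c * x ^ (gs ! j))
      = y ^ (h - 1) * (\<Sum>gs\<in>several_bad_profiles L h. prod_list (map w gs))"
    using assms(3) unfolding sum_distrib_left w_def
    by (intro sum.cong refl) (simp add: prod_nonzero_positions_eq[of y] several_bad_profiles_def)
  also have "(\<Sum>gs\<in>several_bad_profiles L h. prod_list (map w gs))
      = (\<Sum>gs\<in>several_bad_profiles L h. if 2 \<le> nonzero_count gs then prod_list (map w gs) else 0)"
    by (intro sum.cong) (auto simp: several_bad_profiles_def)
  also have "\<dots> \<le> many_nonzero_weight w h L 2"
    unfolding many_nonzero_weight_def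
    by (rule sum_mono2[OF finite_bounded_lists])
       (auto simp: several_bad_profiles_def w_nonneg intro!: prod_list_nonneg)
  also have "\<dots> \<le> (real L * S) ^ 2 * (1 + S) ^ L"
    unfolding S_w by (rule many_nonzero_weight_le[of w, OF _ w_nonneg]) (simp add: w_def)
  finally show ?thesis using assms(3) by (simp add: mult_left_mono mult.assoc)
qed

section \<open>The numerical recursion\<close>

definition tail_coeff :: "real \<Rightarrow> nat \<Rightarrow> real" where
  "tail_coeff L k = 1 / L ^ (11 + 3 * k)"

definition tail_base :: "real \<Rightarrow> nat \<Rightarrow> real" where
  "tail_base L k = (2 - (1 / 2) ^ k) / L ^ 5"

lemma sum_power_atLeast1_le:
  fixes t :: real
  assumes "0 \<le> t" "t < 1"
  shows "(\<Sum>a\<in>{1..h}. t ^ a) \<le> 1 / (1 - t)"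
proof -
  have "(\<Sum>a\<in>{1..h}. t ^ a) \<le> (\<Sum>a<Suc h. t ^ a)"
    using assms by (intro sum_mono2) auto
  also have "\<dots> = (1 - t ^ Suc h) / (1 - t)"
    using assms sum_gp_strict[of t "Suc h"] by simp
  also have "\<dots> \<le> 1 / (1 - t)"
    using assms by (intro divide_right_mono) auto
  finally show ?thesis .
qed

lemma one_plus_power_le_3:
  fixes S :: real
  assumes "0 \<le> S" "real n * S \<le> 1"
  shows "(1 + S) ^ n \<le> 3"
proof -
  have "(1 + S) ^ n \<le> exp S ^ n" using assms by (intro power_mono) auto
  also have "\<dots> = exp (real n * S)" by (simp add: exp_of_nat_mult)
  also have "\<dots> \<le> exp 1" using assms by simp
  also have "\<dots> \<le> 3" by (rule exp_le)
  finally show ?thesis .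
qed

lemma tail_base_bounds:
  assumes "0 < L"
  shows "0 < tail_base L k" "tail_base L k \<le> tail_base L (Suc k)"
    "tail_base L k \<le> 2 / L ^ 5" "1 / L ^ 5 \<le> tail_base L k"
proof -
  have "(1 / 2 :: real) ^ k \<le> 1" by (simp add: power_le_one)
  moreover have "(1 / 2 :: real) ^ Suc k \<le> (1 / 2) ^ k" by (simp add: power_le_one)
  ultimately show "0 < tail_base L k" "tail_base L k \<le> tail_base L (Suc k)"
    "tail_base L k \<le> 2 / L ^ 5" "1 / L ^ 5 \<le> tail_base L k"
    using assms by (auto simp: tail_base_def divide_right_mono)
qed

lemma sum_tail_base_ratio_le:
  assumes "0 < L"
  shows "(\<Sum>a\<in>{1..h}. (tail_base L k / tail_base L (Suc k)) ^ a) \<le> 4 * 2 ^ k"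
proof -
  define u :: real where "u = (1 / 2) ^ k"
  have u: "0 < u" "u \<le> 1" by (auto simp: u_def power_le_one)
  define t where "t = tail_base L k / tail_base L (Suc k)"
  have "t = (2 - u) / (2 - u / 2)"
    using assms by (simp add: t_def tail_base_def u_def)
  also have "\<dots> = (4 - 2 * u) / (4 - u)"
    using u by (simp add: field_simps)
  finally have t: "t = (4 - 2 * u) / (4 - u)" .
  then have "0 \<le> t" "t < 1" using u by auto
  then have "(\<Sum>a\<in>{1..h}. t ^ a) \<le> 1 / (1 - t)" by (rule sum_power_atLeast1_le)
  also have "1 / (1 - t) = (4 - u) / u" using u by (simp add: t field_simps)
  also have "\<dots> \<le> 4 / u" using u by (intro divide_right_mono) auto
  also have "\<dots> = 4 * 2 ^ k" by (simp add: u_def power_one_over)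
  finally show ?thesis unfolding t_def .
qed

lemma tail_coeff_power_4_le:
  fixes L :: real
  assumes L: "4 \<le> L"
  shows "L ^ 10 * tail_coeff L k * 4 ^ k \<le> 1 / L"
proof -
  have "(4::real) \<le> L ^ 1" using L by simp
  also have "\<dots> \<le> L ^ 3" using L by (intro power_increasing) auto
  finally have power_4: "(4::real) ^ k \<le> (L ^ 3) ^ k" by (intro power_mono) auto
  have "L ^ (11 + 3 * k) = L ^ Suc 10 * (L ^ 3) ^ k"
    by (simp only: power_add power_mult) simp
  then have "L ^ (11 + 3 * k) = L ^ 10 * (L * (L ^ 3) ^ k)"
    by (simp only: power_Suc2 mult_ac)
  then have "L ^ 10 * tail_coeff L k * 4 ^ k = 4 ^ k / (L * (L ^ 3) ^ k)"
    using L by (simp add: tail_coeff_def)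
  also have "\<dots> \<le> (L ^ 3) ^ k / (L * (L ^ 3) ^ k)"
    using L power_4 by (intro divide_right_mono) auto
  finally show ?thesis using L by simp
qed

lemma single_bad_child_term_le:
  fixes L c x y :: real
  assumes "0 < L" "0 \<le> c" "0 \<le> x" "x \<le> y" "x \<le> 2 / L ^ 5"
  shows "L * (c * x ^ (h + 1)) \<le> 2 / L * (c / L ^ 3 * y ^ h)"
proof -
  have "L * (c * x ^ (h + 1)) = L * c * x * x ^ h" by (simp add: mult_ac)
  also have "\<dots> \<le> L * c * (2 / L ^ 5) * y ^ h"
    using assms by (intro mult_mono power_mono) auto
  also have "\<dots> = 2 / L * (c / L ^ 3 * y ^ h)"
    using assms by (simp add: field_simps eval_nat_numeral)
  finally show ?thesis .
qed

lemma several_bad_children_term_le: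
  fixes L c y S q E :: real
  assumes L: "0 < L" and c: "0 \<le> c" and y: "1 / L ^ 5 \<le> y"
    and S: "0 \<le> S" "S \<le> c * q" and E: "0 \<le> E" "E \<le> 3"
    and small: "L ^ 10 * c * q ^ 2 \<le> 16 / L" and h: "1 \<le> h"
  shows "y ^ (h - 1) * (L * S) ^ 2 * E \<le> 48 / L * (c / L ^ 3 * y ^ h)"
proof -
  have "0 < 1 / L ^ 5" using L by simp
  with y have y_pos: "0 < y" by linarith
  have "y ^ h = y ^ (h - 1) * y" using h by (simp add: power_Suc2[symmetric])
  then have "y ^ (h - 1) \<le> L ^ 5 * y ^ h"
    using y y_pos L by (simp add: field_simps mult_left_mono)
  then have "y ^ (h - 1) * (L * S) ^ 2 * E \<le> (L ^ 5 * y ^ h) * (L * (c * q)) ^ 2 * 3"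
    using L S E y_pos by (intro mult_mono power_mono) auto
  also have "\<dots> = 3 * (c / L ^ 3 * y ^ h) * (L ^ 10 * c * q ^ 2)"
    using L by (simp add: field_simps power2_eq_square eval_nat_numeral)
  also have "\<dots> \<le> 3 * (c / L ^ 3 * y ^ h) * (16 / L)"
    using L c y_pos small by (intro mult_left_mono) auto
  finally show ?thesis by (simp add: field_simps)
qed

lemma tail_weight_bounds:
  fixes L h k :: nat
  assumes L: "50 \<le> L"
  defines "S \<equiv> \<Sum>a\<in>{1..h}. tail_coeff L k * (tail_base L k / tail_base L (Suc k)) ^ a"
  shows "0 \<le> S" "S \<le> tail_coeff L k * (4 * 2 ^ k)" "real L * S \<le> 1"
proof -
  let ?c = "tail_coeff L k"
  have Lpos: "0 < real L" using L by simp
  have c: "0 < ?c" using Lpos by (simp add: tail_coeff_def)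
  have "0 \<le> tail_base L k / tail_base L (Suc k)"
    using tail_base_bounds[OF Lpos] by (intro divide_nonneg_nonneg less_imp_le)
  then show S: "0 \<le> S" "S \<le> ?c * (4 * 2 ^ k)"
    using c sum_tail_base_ratio_le[OF Lpos, of k h]
    unfolding S_def sum_distrib_left[symmetric]
    by (auto intro!: mult_left_mono mult_nonneg_nonneg sum_nonneg)
  have "real L * S \<le> 4 * (real L * ?c * 2 ^ k)"
    using S Lpos by (simp add: mult_ac)
  also have "\<dots> \<le> 4 * (real L ^ 10 * ?c * 4 ^ k)"
    using Lpos c power_increasing[of 1 10 "real L"] power_mono[of "2::real" 4 k] L
    by (intro mult_left_mono mult_mono) auto
  also have "\<dots> \<le> 4 * (1 / real L)"
    using L tail_coeff_power_4_le[of L k] by simp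
  also have "\<dots> \<le> 1" using L by simp
  finally show "real L * S \<le> 1" .
qed

lemma tail_bound_step:
  fixes L h k :: nat
  assumes L: "50 \<le> L" and h: "1 \<le> h"
  defines "c \<equiv> tail_coeff L k" and "x \<equiv> tail_base L k" and "y \<equiv> tail_base L (Suc k)"
  shows "real L * (c * x ^ (h + 1))
           + (\<Sum>gs\<in>several_bad_profiles L h. \<Prod>j\<in>nonzero_positions gs. c * x ^ (gs ! j))
         \<le> tail_coeff L (Suc k) * y ^ h"
proof -
  define S where "S = (\<Sum>a\<in>{1..h}. c * (x / y) ^ a)"
  have Lpos: "0 < real L" using L by simp
  have c: "0 < c" using Lpos by (simp add: c_def tail_coeff_def)
  have x: "0 < x" "x \<le> y" "x \<le> 2 / real L ^ 5" and y: "1 / real L ^ 5 \<le> y"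
    using tail_base_bounds[OF Lpos] unfolding x_def y_def by blast+
  have S: "0 \<le> S" "S \<le> c * (4 * 2 ^ k)" "real L * S \<le> 1"
    using tail_weight_bounds[OF L, of k h] unfolding S_def c_def x_def y_def by auto
  have "(\<Sum>gs\<in>several_bad_profiles L h. \<Prod>j\<in>nonzero_positions gs. c * x ^ (gs ! j))
        \<le> y ^ (h - 1) * (real L * S) ^ 2 * (1 + S) ^ L"
    unfolding S_def using c x by (intro several_bad_profiles_weight_le) auto
  also have "\<dots> \<le> 48 / real L * (c / real L ^ 3 * y ^ h)"
  proof (rule several_bad_children_term_le[OF Lpos _ y S(1,2)])
    have "(4 * 2 ^ k :: real) ^ 2 = 16 * 4 ^ k" by (simp add: power2_eq_square flip: power_mult_distrib)
    then show "real L ^ 10 * c * (4 * 2 ^ k) ^ 2 \<le> 16 / real L"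
      using tail_coeff_power_4_le[of L k] L by (simp add: c_def)
    show "(1 + S) ^ L \<le> 3" using S by (intro one_plus_power_le_3) auto
  qed (use c S h in auto)
  finally have several: "(\<Sum>gs\<in>several_bad_profiles L h. \<Prod>j\<in>nonzero_positions gs. c * x ^ (gs ! j))
      \<le> 48 / real L * (c / real L ^ 3 * y ^ h)" .
  have single: "real L * (c * x ^ (h + 1)) \<le> 2 / real L * (c / real L ^ 3 * y ^ h)"
    using Lpos c x by (intro single_bad_child_term_le) auto
  have "2 / real L * (c / real L ^ 3 * y ^ h) + 48 / real L * (c / real L ^ 3 * y ^ h)
      \<le> c / real L ^ 3 * y ^ h"
    using L c x by (simp add: field_simps)
  moreover have c_Suc: "tail_coeff L (Suc k) = c / real L ^ 3"
    by (simp add: c_def tail_coeff_def power_add)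
  ultimately show ?thesis unfolding c_Suc using single several by linarith
qed

lemma tail_bound_start:
  fixes L :: real
  assumes "1 \<le> L" "1 \<le> h"
  shows "(1 / L ^ 16) ^ h \<le> tail_coeff L 0 * tail_base L 0 ^ h"
proof -
  have "(1 / L ^ 16) ^ h = (1 / L ^ 11) ^ h * (1 / L ^ 5) ^ h"
    by (simp flip: power_mult_distrib power_add)
  also have "\<dots> \<le> (1 / L ^ 11) ^ 1 * (1 / L ^ 5) ^ h"
    using assms by (intro mult_right_mono power_decreasing) auto
  finally show ?thesis by (simp add: tail_coeff_def tail_base_def)
qed

lemma tail_bound_le_powr:
  fixes L :: real and k b h :: nat
  assumes L: "2 \<le> L" and h: "1 \<le> h"
  shows "tail_coeff L k * tail_base L k ^ h \<le> L powr (- (real k + real h / (real b + 1)) - 2 * real h - 13)"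
proof -
  define e where "e = 11 + 3 * k + (if k = 0 then 5 else 4) * h"
  have "real h / (real b + 1) \<le> real h" by (simp add: divide_le_eq_1 field_simps)
  then have exponent: "real k + real h / (real b + 1) + 2 * real h + 13 \<le> real e"
    using h by (cases "k = 0") (auto simp: e_def)
  have "tail_base L k \<le> 1 / L ^ (if k = 0 then 5 else 4)"
  proof -
    have "tail_base L k \<le> 2 / L ^ 5" using tail_base_bounds[of L k] L by simp
    also have "\<dots> \<le> L / L ^ 5" using L by (intro divide_right_mono) auto
    also have "\<dots> = 1 / L ^ 4" using L by (simp add: eval_nat_numeral)
    finally show ?thesis by (simp add: tail_base_def)
  qed
  then have "tail_coeff L k * tail_base L k ^ h
      \<le> 1 / L ^ (11 + 3 * k) * (1 / L ^ (if k = 0 then 5 else 4)) ^ h"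
    using tail_base_bounds[of L k] L unfolding tail_coeff_def
    by (intro mult_left_mono power_mono) auto
  also have "\<dots> = 1 / L ^ e" by (simp add: e_def power_add power_mult power_one_over)
  also have "\<dots> = L powr (- real e)" using L by (simp add: powr_minus_divide powr_realpow)
  also have "\<dots> \<le> L powr (- (real k + real h / (real b + 1)) - 2 * real h - 13)"
    using exponent L by (intro powr_mono) auto
  finally show ?thesis .
qed

section \<open>Independence of the children\<close>

lemma measurable_PiM_count_space_finite:
  fixes K :: "'i set" and g :: "('i \<Rightarrow> 'c::countable) \<Rightarrow> 'b::countable"
  assumes K: "finite K"
  shows "g \<in> measurable (PiM K (\<lambda>_. count_space UNIV)) (count_space UNIV)"
proof -
  have all_sets: "A \<in> sets (PiM K (\<lambda>_. count_space UNIV))"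
    if A: "A \<subseteq> space (PiM K (\<lambda>_. count_space (UNIV :: 'c set)))" for A
  proof -
    have "countable A"
      using A K countable_PiE[of K "\<lambda>_. UNIV :: 'c set"] countable_subset by (auto simp: space_PiM)
    have "PiE K (\<lambda>t. {z t}) = {z}" if "z \<in> A" for z
      using A that by (intro PiE_singleton) (auto simp: space_PiM PiE_def)
    then have "A = (\<Union>z\<in>A. PiE K (\<lambda>t. {z t}))" by auto
    also have "\<dots> \<in> sets (PiM K (\<lambda>_. count_space UNIV))"
      using \<open>countable A\<close> K by (intro sets.countable_UN'' sets_PiM_I_finite) auto
    finally show ?thesis .
  qed
  show ?thesis
    unfolding measurable_count_space_eq2_countable by (intro conjI ballI all_sets) auto
qed

locale indep_heights = prob_space M for M :: "'a measure" +
  fixes \<xi> :: "int \<Rightarrow> 'a \<Rightarrow> nat" and L :: nat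
  assumes indep_\<xi>: "indep_vars (\<lambda>_. count_space UNIV) \<xi> UNIV" and L_pos: "0 < L"
begin

definition height :: "nat \<Rightarrow> int \<Rightarrow> 'a \<Rightarrow> int" where
  "height k i \<omega> = Hf L (\<lambda>t. \<xi> t \<omega>) k i"

definition height_event :: "nat \<Rightarrow> int \<Rightarrow> int \<Rightarrow> 'a set" where
  "height_event k i v = {\<omega> \<in> space M. height k i \<omega> = v}"

lemma height_eq_restrict: "height k i \<omega> = Hf L (restrict (\<lambda>t. \<xi> t \<omega>) (block L k i)) k i"
  unfolding height_def by (rule Hf_cong_block) simp

lemma measurable_Hf_PiM_block:
  "(\<lambda>z. Hf L z k i) \<in> measurable (PiM (block L k i) (\<lambda>_. count_space UNIV)) (count_space UNIV)"
  by (rule measurable_PiM_count_space_finite) (simp add: block_def)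

lemma measurable_\<xi>: "\<xi> t \<in> measurable M (count_space UNIV)"
  using indep_\<xi> by (auto simp: indep_vars_def)

lemma measurable_height: "height k i \<in> measurable M (count_space UNIV)"
  unfolding height_eq_restrict[abs_def]
  by (rule measurable_compose[OF measurable_restrict[OF measurable_\<xi>] measurable_Hf_PiM_block])

lemma height_event_eq_vimage: "height_event k i v = height k i -` {v} \<inter> space M"
  by (auto simp: height_event_def)

lemma height_event_in_events: "height_event k i v \<in> events"
  unfolding height_event_eq_vimage by (rule measurable_sets[OF measurable_height]) simp

lemma indep_vars_children_height:
  "indep_vars (\<lambda>_. count_space UNIV) (\<lambda>j. height k (i * int L + int j)) UNIV"
proof -
  define K where "K j = block L k (i * int L + int j)" for j
  have "disjoint_family K"
    unfolding disjoint_family_on_def K_def using L_pos by (intro ballI impI disjoint_blocks) auto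
  then have "indep_vars (\<lambda>j. PiM (K j) (\<lambda>_. count_space UNIV))
      (\<lambda>j \<omega>. restrict (\<lambda>t. \<xi> t \<omega>) (K j)) UNIV"
    by (intro indep_vars_restrict[OF indep_\<xi>]) auto
  then have "indep_vars (\<lambda>_. count_space UNIV)
      (\<lambda>j \<omega>. Hf L (restrict (\<lambda>t. \<xi> t \<omega>) (K j)) k (i * int L + int j)) UNIV"
    by (rule indep_vars_compose2) (simp add: K_def measurable_Hf_PiM_block)
  then show ?thesis unfolding K_def height_eq_restrict[symmetric] .
qed

lemma prob_Inter_children_height_event:
  assumes "finite J" "J \<noteq> {}"
  shows "prob (\<Inter>j\<in>J. height_event k (i * int L + int j) (v j))
           = (\<Prod>j\<in>J. prob (height_event k (i * int L + int j) (v j)))"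
  unfolding height_event_eq_vimage
  using indep_varsD[OF indep_vars_children_height, of J "\<lambda>j. {v j}"] assms by simp

section \<open>The tail bound, by induction on the level\<close>

lemma height_event_Suc_subset:
  assumes "1 \<le> h"
  shows "height_event (Suc k) i (int h)
    \<subseteq> (\<Union>j<L. height_event k (i * int L + int j) (int h + 1))
      \<union> (\<Union>gs\<in>several_bad_profiles L h. \<Inter>j\<in>nonzero_positions gs.
            height_event k (i * int L + int j) (int (gs ! j)))"
proof
  fix \<omega> assume \<omega>: "\<omega> \<in> height_event (Suc k) i (int h)"
  define hs where "hs = map (\<lambda>j. height k (i * int L + int j) \<omega>) [0..<L]"
  have nonneg: "0 \<le> v" if "v \<in> set hs" for v
    using that Hf_nonneg by (auto simp: hs_def height_def)
  have "parent_H hs = int h"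
    using \<omega> unfolding height_event_def height_def Hf_Suc_eq_parent_H hs_def by simp
  then consider "int h + 1 \<in> set hs" | "2 \<le> nonzero_count hs" "sum_list hs = int h - 1"
    using parent_H_eq_cases nonneg assms by metis
  then show "\<omega> \<in> (\<Union>j<L. height_event k (i * int L + int j) (int h + 1))
      \<union> (\<Union>gs\<in>several_bad_profiles L h. \<Inter>j\<in>nonzero_positions gs.
            height_event k (i * int L + int j) (int (gs ! j)))"
  proof cases
    case 1
    then show ?thesis using \<omega> by (auto simp: hs_def height_event_def)
  next
    case 2
    then have "map nat hs \<in> several_bad_profiles L h"
      using nonneg assms by (intro map_nat_in_several_bad_profiles) (auto simp: hs_def)
    moreover have "\<omega> \<in> height_event k (i * int L + int j) (int (map nat hs ! j))"
      if "j \<in> nonzero_positions (map nat hs)" for j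
      using that \<omega> nonneg[of "hs ! j"] by (auto simp: nonzero_positions_def height_event_def hs_def)
    ultimately show ?thesis by blast
  qed
qed

lemma prob_height_event_Suc_le:
  assumes "1 \<le> h"
  shows "prob (height_event (Suc k) i (int h))
    \<le> (\<Sum>j<L. prob (height_event k (i * int L + int j) (int h + 1)))
      + (\<Sum>gs\<in>several_bad_profiles L h. \<Prod>j\<in>nonzero_positions gs.
            prob (height_event k (i * int L + int j) (int (gs ! j))))"
proof -
  let ?E = "\<lambda>j v. height_event k (i * int L + int j) v"
  have nonempty: "nonzero_positions gs \<noteq> {}" if "gs \<in> several_bad_profiles L h" for gs
    using that by (intro nonzero_positions_nonempty) (auto simp: several_bad_profiles_def)
  have finite: "finite (nonzero_positions gs)" for gs
    by (simp add: nonzero_positions_def)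
  have Inter_events: "(\<Inter>j\<in>nonzero_positions gs. ?E j (int (gs ! j))) \<in> events"
    if "gs \<in> several_bad_profiles L h" for gs
    using nonempty[OF that] finite by (intro sets.finite_INT height_event_in_events) auto
  have "prob (height_event (Suc k) i (int h))
      \<le> prob ((\<Union>j<L. ?E j (int h + 1))
               \<union> (\<Union>gs\<in>several_bad_profiles L h. \<Inter>j\<in>nonzero_positions gs. ?E j (int (gs ! j))))"
    using height_event_Suc_subset[OF assms] Inter_events finite_several_bad_profiles
    by (intro finite_measure_mono sets.Un sets.finite_UN height_event_in_events) auto
  also have "\<dots> \<le> (\<Sum>j<L. prob (?E j (int h + 1)))
      + (\<Sum>gs\<in>several_bad_profiles L h. prob (\<Inter>j\<in>nonzero_positions gs. ?E j (int (gs ! j))))"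
    using Inter_events finite_several_bad_profiles
    by (intro order.trans[OF measure_Un_le] add_mono finite_measure_subadditive_finite
          sets.finite_UN height_event_in_events) (auto intro: height_event_in_events)
  also have "\<dots> = (\<Sum>j<L. prob (?E j (int h + 1)))
      + (\<Sum>gs\<in>several_bad_profiles L h. \<Prod>j\<in>nonzero_positions gs. prob (?E j (int (gs ! j))))"
    using nonempty finite by (simp add: prob_Inter_children_height_event)
  finally show ?thesis .
qed

lemma prob_height_event_le:
  assumes L: "50 \<le> L"
    and tail: "\<And>i n. prob {\<omega> \<in> space M. n \<le> \<xi> i \<omega>} \<le> (1 / real L ^ 16) ^ n"
    and h: "1 \<le> h"
  shows "prob (height_event k i (int h)) \<le> tail_coeff L k * tail_base L k ^ h"
  using h
proof (induction k arbitrary: i h)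
  case 0
  have "{\<omega> \<in> space M. h \<le> \<xi> i \<omega>} = \<xi> i -` {h..} \<inter> space M" by auto
  then have "{\<omega> \<in> space M. h \<le> \<xi> i \<omega>} \<in> events"
    using measurable_sets[OF measurable_\<xi>] by simp
  moreover have "height_event 0 i (int h) \<subseteq> {\<omega> \<in> space M. h \<le> \<xi> i \<omega>}"
    by (auto simp: height_event_def height_def)
  ultimately have "prob (height_event 0 i (int h)) \<le> (1 / real L ^ 16) ^ h"
    using tail order.trans finite_measure_mono by blast
  also have "\<dots> \<le> tail_coeff L 0 * tail_base L 0 ^ h"
    using L "0" by (intro tail_bound_start) auto
  finally show ?case .
next
  case (Suc k)
  let ?c = "tail_coeff L k" and ?x = "tail_base L k"
  have "prob (height_event (Suc k) i (int h))
    \<le> (\<Sum>j<L. prob (height_event k (i * int L + int j) (int h + 1)))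
      + (\<Sum>gs\<in>several_bad_profiles L h. \<Prod>j\<in>nonzero_positions gs.
            prob (height_event k (i * int L + int j) (int (gs ! j))))"
    by (rule prob_height_event_Suc_le[OF Suc.prems])
  also have "\<dots> \<le> (\<Sum>j<L. ?c * ?x ^ (h + 1))
      + (\<Sum>gs\<in>several_bad_profiles L h. \<Prod>j\<in>nonzero_positions gs. ?c * ?x ^ (gs ! j))"
  proof (intro add_mono sum_mono prod_mono conjI)
    show "prob (height_event k (i * int L + int j) (int h + 1)) \<le> ?c * ?x ^ (h + 1)" for j
      using Suc.IH[of "h + 1"] by (simp add: add.commute)
    show "prob (height_event k (i * int L + int j) (int (gs ! j))) \<le> ?c * ?x ^ (gs ! j)"
      if "j \<in> nonzero_positions gs" for gs j
      using that Suc.IH[of "gs ! j"] by (simp add: nonzero_positions_def)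
  qed simp
  also have "\<dots> \<le> tail_coeff L (Suc k) * tail_base L (Suc k) ^ h"
    using tail_bound_step[OF L Suc.prems, of k] by simp
  finally show ?case .
qed

end

theorem lemma3p2:
  fixes M :: "'a measure" and \<xi> :: "int \<Rightarrow> 'a \<Rightarrow> nat" and \<rho> :: real
    and k b h :: nat
  assumes "prob_space M"
    and "\<rho> < (10^6 :: real) powr (-16)"
    and "prob_space.indep_vars M (\<lambda>_. count_space UNIV) \<xi> UNIV"
    and "\<And>i n. measure M {\<omega> \<in> space M. \<xi> i \<omega> \<ge> n} = \<rho> ^ n"
    and "h \<ge> 1"
  shows "measure M {\<omega> \<in> space M. Hf (10^6) (\<lambda>i. \<xi> i \<omega>) k 0 = int h
                                 \<and> Bf (10^6) (\<lambda>i. \<xi> i \<omega>) k 0 = b}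
         \<le> (10^6 :: real) powr (- (real k + real h / (real b + 1)) - 2 * real h - 13)"
proof -
  interpret indep_heights M \<xi> "10^6"
    using assms(1,3) by (simp add: indep_heights_def indep_heights_axioms_def)
  have "0 \<le> \<rho>" using assms(4)[of _ 1] by (metis measure_nonneg power_one_right)
  moreover have "\<rho> \<le> 1 / real (10^6 :: nat) ^ 16"
    using assms(2) by (simp add: powr_minus_divide powr_realpow)
  ultimately have tail: "prob {\<omega> \<in> space M. n \<le> \<xi> i \<omega>} \<le> (1 / real (10^6 :: nat) ^ 16) ^ n"
    for i n unfolding assms(4) by (intro power_mono)
  have "measure M {\<omega> \<in> space M. Hf (10^6) (\<lambda>i. \<xi> i \<omega>) k 0 = int h
                                 \<and> Bf (10^6) (\<lambda>i. \<xi> i \<omega>) k 0 = b}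
        \<le> prob (height_event k 0 (int h))"
    by (intro finite_measure_mono height_event_in_events) (unfold height_event_def height_def, blast)
  also have "\<dots> \<le> tail_coeff (10^6) k * tail_base (10^6) k ^ h"
    using prob_height_event_le[OF _ tail assms(5)] by simp
  also have "\<dots> \<le> (10^6 :: real) powr (- (real k + real h / (real b + 1)) - 2 * real h - 13)"
    using assms(5) by (intro tail_bound_le_powr) auto
  finally show ?thesis .
qed

end
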